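(* Let $(\mathcal{X},\rho,\nu)$ be a metric measure space, where $\rho$ is a separable metric and $\nu$ is a finite Borel measure. Let $\mathbb{X}=(X_n)_{n\ge 0}$ be a stochastic process in $\mathcal{X}$ that is ergodically dominated by $\nu$, and let $\eta:\mathcal{X}\to\mathcal{Y}$ be a measurable label function with $\nu$-negligible boundary, i.e. $\nu(\partial_\eta\mathcal{X})=0$. Then the nearest neighbor rule is online consistent with respect to $(\mathbb{X},\eta)$: for any nearest neighbor process $(\tilde X_n)_{n\ge1}$ of $\mathbb{X}$, \[\limsup_{N\to\infty}\frac1N\sum_{n=1}^N \mathbb{1}\{\eta(X_n)\neq\eta(\tilde X_n)\}=0\quad\text{almost surely.}\]
   Context: For a process $\mathbb{X}=(X_n)_{n\ge0}$, write $\mathbb{X}_{<n}=\{X_0,\dots,X_{n-1}\}$. A nearest neighbor process of $\mathbb{X}$ is any process $(\tilde X_n)_{n\ge1}$ with $\tilde X_n\in\arg\min_{x\in\mathbb{X}_{<n}}\rho(X_n,x)$. For a measurable $\eta:\mathcal{X}\to\mathcal{Y}$, $\mathrm{margin}_\eta(x)=\inf\{\rho(x,x'): \eta(x')\neq\eta(x)\}$ (infimum of the empty set is $+\infty$), and the boundary is $\partial_\eta\mathcal{X}=\{x:\mathrm{margin}_\eta(x)=0\}$. The process $\mathbb{X}$ is ergodically dominated by $\nu$ if for every $\epsilon>0$ there is $\delta>0$ such that every measurable $A\subset\mathcal{X}$ with $\nu(A)<\delta$ satisfies $\limsup_{N\to\infty}\frac1N\sum_{n=1}^N\mathbb{1}\{X_n\in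 A\}<\epsilon$ almost surely. *)

theory Defs
  imports "HOL-Probability.Probability"
begin

definition separable_metric :: "'a::metric_space itself \<Rightarrow> bool" where
  "separable_metric _ \<longleftrightarrow> (\<exists>D::'a set. countable D \<and> closure D = UNIV)"

text \<open>margin of a label function; Inf of the empty set in ereal is +infinity.\<close>
definition margin :: "('a::metric_space \<Rightarrow> 'b) \<Rightarrow> 'a \<Rightarrow> ereal" where
  "margin \<eta> x = Inf {ereal (dist x x') | x'. \<eta> x' \<noteq> \<eta> x}"

definition boundary :: "('a::metric_space \<Rightarrow> 'b) \<Rightarrow> 'a set" where
  "boundary \<eta> = {x. margin \<eta> x = 0}"

definition ergodically_dominated ::
    "'w measure \<Rightarrow> (nat \<Rightarrow> 'w \<Rightarrow> 'a::metric_space) \<Rightarrow> 'a measure \<Rightarrow> bool" where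
  "ergodically_dominated P X \<nu> \<longleftrightarrow>
     (\<forall>\<epsilon>>0. \<exists>\<delta>>0. \<forall>A \<in> sets (borel :: 'a measure). measure \<nu> A < \<delta> \<longrightarrow>
        (AE \<omega> in P. limsup (\<lambda>N. ereal ((\<Sum>n=1..N. indicator A (X n \<omega>)) / real N)) < ereal \<epsilon>))"

definition nn_process ::
    "(nat \<Rightarrow> 'w \<Rightarrow> 'a::metric_space) \<Rightarrow> (nat \<Rightarrow> 'w \<Rightarrow> 'a) \<Rightarrow> bool" where
  "nn_process X Xt \<longleftrightarrow>
     (\<forall>n\<ge>1. \<forall>\<omega>. Xt n \<omega> \<in> {X i \<omega> | i. i < n} \<and>
        (\<forall>i<n. dist (X n \<omega>) (Xt n \<omega>) \<le> dist (X n \<omega>) (X i \<omega>)))"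

end

theory Submission imports Defs begin

text \<open>A nearest neighbour mistake at a point \<open>x\<close> of margin at least \<open>r\<close> needs all earlier
  points to lie at distance at least \<open>r\<close> from \<open>x\<close>. Using separability, cover all of the space
  except a set of small \<open>\<nu>\<close>-measure by finitely many, say \<open>K\<close>, cells of diameter less than \<open>r\<close>.
  Each cell then receives at most one mistake at a point of margin at least \<open>r\<close>, so up to time
  \<open>N\<close> the number of mistakes is at most \<open>K\<close> plus the number of visits to the set of points of
  margin below \<open>r\<close> or outside the cells. Since the boundary is \<open>\<nu>\<close>-null, this set has small
  \<open>\<nu>\<close>-measure for small \<open>r\<close>, and ergodic domination makes its visit frequency small.\<close>

lemma margin_nonneg: "0 \<le> margin \<eta> x"
  unfolding margin_def by (auto intro: Inf_greatest)

lemma margin_le_dist: "\<eta> y \<noteq> \<eta> x \<Longrightarrow> margin \<eta> x \<le> ereal (dist x y)"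
  unfolding margin_def by (rule Inf_lower) auto

lemma open_margin_less: "open {x. margin \<eta> x < ereal r}"
proof (rule openI)
  fix x assume "x \<in> {x. margin \<eta> x < ereal r}"
  then obtain x' where x': "\<eta> x' \<noteq> \<eta> x" "dist x x' < r"
    by (auto simp: margin_def Inf_less_iff)
  have "margin \<eta> y < ereal r" if y: "y \<in> ball x (r - dist x x')" for y
  proof (cases "\<eta> y = \<eta> x")
    case True
    then have "margin \<eta> y \<le> ereal (dist y x')" using x' by (intro margin_le_dist) simp
    also have "dist y x' < r" using y dist_triangle[of y x' x] by (simp add: dist_commute)
    finally show ?thesis by simp
  next
    case False
    then have "margin \<eta> y \<le> ereal (dist y x)" by (intro margin_le_dist) simp
    also have "dist y x < r"
      using y zero_le_dist[of x x'] by (simp add: dist_commute del: zero_le_dist)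
    finally show ?thesis by simp
  qed
  moreover have "0 < r - dist x x'" using x' by simp
  ultimately show "\<exists>e>0. ball x e \<subseteq> {x. margin \<eta> x < ereal r}" by blast
qed

lemma ereal_eq_0_if_less_inverse_Suc:
  fixes z :: ereal
  assumes "0 \<le> z" and "\<And>m. z < ereal (1 / real (Suc m))"
  shows "z = 0"
proof -
  have "(\<lambda>m. ereal (1 / real (Suc m))) \<longlonglongrightarrow> ereal 0"
    using LIMSEQ_inverse_real_of_nat by (intro tendsto_ereal) (simp add: inverse_eq_divide)
  then have "z \<le> ereal 0"
    by (rule LIMSEQ_le_const) (use assms(2) less_imp_le in blast)
  then show ?thesis using assms(1) by (simp add: zero_ereal_def)
qed

lemma boundary_eq_INT_margin_less:
  "boundary \<eta> = (\<Inter>m. {x. margin \<eta> x < ereal (1 / real (Suc m))})"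
  by (auto simp: boundary_def margin_nonneg intro: ereal_eq_0_if_less_inverse_Suc)

lemma (in finite_measure) decseq_ex_measure_less:
  assumes "range A \<subseteq> sets M" and "decseq A" and "measure M (\<Inter>i. A i) = 0" and "0 < e"
  shows "\<exists>i. measure M (A i) < e"
proof -
  have "(\<lambda>i. measure M (A i)) \<longlonglongrightarrow> 0"
    using finite_Lim_measure_decseq[OF assms(1,2)] assms(3) by simp
  then have "eventually (\<lambda>i. measure M (A i) < e) sequentially"
    using assms(4) by (rule order_tendstoD)
  then show ?thesis by (auto simp: eventually_sequentially)
qed

lemma dense_balls_cover:
  fixes D :: "'a::metric_space set"
  assumes "countable D" and "closure D = UNIV" and "0 < r"
  shows "\<exists>k. x \<in> ball (from_nat_into D k) r"
proof -
  obtain d where "d \<in> D" "dist d x < r"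
    using assms(2,3) closure_approachable[of x D] by auto
  moreover obtain k where "from_nat_into D k = d"
    using from_nat_into_surj[OF assms(1) \<open>d \<in> D\<close>] by blast
  ultimately show ?thesis by auto
qed

lemma card_nn_mistakes_in_cells_le:
  fixes x xt :: "nat \<Rightarrow> 'a::metric_space" and B :: "nat \<Rightarrow> 'a set"
  assumes nn: "\<And>n i. i < n \<Longrightarrow> dist (x n) (xt n) \<le> dist (x n) (x i)"
    and small: "\<And>k y z. y \<in> B k \<Longrightarrow> z \<in> B k \<Longrightarrow> dist y z < r"
  shows "card {n\<in>I. \<eta> (x n) \<noteq> \<eta> (xt n) \<and> ereal r \<le> margin \<eta> (x n) \<and> x n \<in> (\<Union>k<K. B k)} \<le> K"
proof -
  define S where "S = {n\<in>I. \<eta> (x n) \<noteq> \<eta> (xt n) \<and> ereal r \<le> margin \<eta> (x n) \<and> x n \<in> (\<Union>k<K. B k)}"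
  have "\<forall>n\<in>S. \<exists>k. k < K \<and> x n \<in> B k" by (auto simp: S_def)
  then obtain f where f: "\<And>n. n \<in> S \<Longrightarrow> f n < K \<and> x n \<in> B (f n)" by metis
  have ne: "f n \<noteq> f m" if "n \<in> S" "m \<in> S" "n < m" for n m
  proof
    assume "f n = f m"
    then have close: "dist (x m) (x n) < r"
      using f[OF that(1)] f[OF that(2)] small[of "x m" "f m" "x n"] by simp
    have "ereal r \<le> margin \<eta> (x m)" using that(2) by (simp add: S_def)
    also have "\<dots> \<le> ereal (dist (x m) (xt m))"
      using that(2) by (intro margin_le_dist) (auto simp: S_def)
    also have "\<dots> \<le> ereal (dist (x m) (x n))"
      using nn[OF that(3)] by simp
    finally show False using close by simp
  qed
  have "inj_on f S"
    by (rule inj_onI) (metis ne neq_iff)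
  moreover have "f ` S \<subseteq> {..<K}" using f by auto
  ultimately have "card S \<le> card {..<K}" by (rule card_inj_on_le) simp
  then show ?thesis by (simp add: S_def)
qed

lemma sum_nn_mistakes_le:
  fixes x xt :: "nat \<Rightarrow> 'a::metric_space" and B :: "nat \<Rightarrow> 'a set"
  assumes nn: "\<And>n i. i < n \<Longrightarrow> dist (x n) (xt n) \<le> dist (x n) (x i)"
    and small: "\<And>k y z. y \<in> B k \<Longrightarrow> z \<in> B k \<Longrightarrow> dist y z < r"
  shows "(\<Sum>n=1..N. if \<eta> (x n) \<noteq> \<eta> (xt n) then 1 else 0 :: real)
     \<le> (\<Sum>n=1..N. indicator ({x. margin \<eta> x < ereal r} \<union> - (\<Union>k<K. B k)) (x n)) + real K"
proof -
  define A where "A = {x. margin \<eta> x < ereal r} \<union> - (\<Union>k<K. B k)"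
  define S where "S = {n\<in>{1..N}. \<eta> (x n) \<noteq> \<eta> (xt n) \<and> ereal r \<le> margin \<eta> (x n) \<and> x n \<in> (\<Union>k<K. B k)}"
  have "card S \<le> K"
    unfolding S_def by (rule card_nn_mistakes_in_cells_le[OF nn small])
  have "S \<subseteq> {1..N}" by (auto simp: S_def)
  then have card_S: "(\<Sum>n=1..N. indicator S n :: real) = real (card S)"
    by (simp add: sum.If_cases indicator_def of_bool_def Int_absorb1)
  have "(\<Sum>n=1..N. if \<eta> (x n) \<noteq> \<eta> (xt n) then 1 else 0 :: real)
     \<le> (\<Sum>n=1..N. indicator A (x n) + indicator S n)"
    by (intro sum_mono) (auto simp: S_def A_def indicator_def not_less)
  also have "\<dots> = (\<Sum>n=1..N. indicator A (x n)) + real (card S)"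
    by (simp only: sum.distrib card_S)
  also have "\<dots> \<le> (\<Sum>n=1..N. indicator A (x n)) + real K"
    using \<open>card S \<le> K\<close> by simp
  finally show ?thesis by (simp add: A_def)
qed

lemma limsup_average_le_if_le_plus_const:
  fixes a b :: "nat \<Rightarrow> real"
  assumes "\<And>N. a N \<le> b N + c"
  shows "limsup (\<lambda>N. ereal (a N / real N)) \<le> limsup (\<lambda>N. ereal (b N / real N))"
proof -
  have "limsup (\<lambda>N. ereal (a N / real N)) \<le> limsup (\<lambda>N. ereal (b N / real N) + ereal (c / real N))"
    using assms by (intro Limsup_mono always_eventually allI)
      (simp add: divide_right_mono flip: add_divide_distrib)
  also have "\<dots> \<le> limsup (\<lambda>N. ereal (b N / real N)) + limsup (\<lambda>N. ereal (c / real N))"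
    by (rule ereal_limsup_add_mono)
  also have "limsup (\<lambda>N. ereal (c / real N)) = 0"
    using tendsto_ereal[OF lim_const_over_n[of c]]
    by (simp add: lim_imp_Limsup zero_ereal_def)
  finally show ?thesis by simp
qed

lemma nn_mistakes_bounded_by_small_set:
  fixes \<nu> :: "'a::metric_space measure" and \<eta> :: "'a \<Rightarrow> 'b" and X Xt :: "nat \<Rightarrow> 'w \<Rightarrow> 'a"
  assumes "separable_metric TYPE('a)" and "sets \<nu> = sets borel" and "finite_measure \<nu>"
    and "boundary \<eta> \<in> null_sets \<nu>" and "nn_process X Xt" and "0 < \<delta>"
  obtains A K where "A \<in> sets borel" and "measure \<nu> A < \<delta>"
    and "\<And>\<omega> N. (\<Sum>n=1..N. if \<eta> (X n \<omega>) \<noteq> \<eta> (Xt n \<omega>) then 1 else 0 :: real)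
                \<le> (\<Sum>n=1..N. indicator A (X n \<omega>)) + real K"
proof -
  interpret finite_measure \<nu> by fact
  obtain D :: "'a set" where D: "countable D" "closure D = UNIV"
    using assms(1) unfolding separable_metric_def by blast
  define U where "U m = {x. margin \<eta> x < ereal (1 / real (Suc m))}" for m
  have "range U \<subseteq> sets \<nu>"
    using assms(2) by (auto simp: U_def intro!: borel_open open_margin_less)
  moreover have "decseq U"
  proof (rule decseq_SucI)
    fix m
    have "ereal (1 / real (Suc (Suc m))) \<le> ereal (1 / real (Suc m))"
      by (simp add: frac_le)
    then show "U (Suc m) \<subseteq> U m" unfolding U_def using order_less_le_trans by blast
  qed
  moreover have "measure \<nu> (\<Inter>m. U m) = 0"
  proof -
    have "(\<Inter>m. U m) = boundary \<eta>" by (simp add: U_def boundary_eq_INT_margin_less)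
    then show ?thesis using null_setsD1[OF assms(4)] by (simp add: measure_def)
  qed
  ultimately have "\<exists>m. measure \<nu> (U m) < \<delta> / 2"
    using \<open>0 < \<delta>\<close> by (intro decseq_ex_measure_less) auto
  then obtain m where m: "measure \<nu> (U m) < \<delta> / 2" ..
  define r where "r = 1 / real (Suc m)"
  define B where "B k = ball (from_nat_into D k) (r / 2)" for k
  have small: "dist y z < r" if "y \<in> B k" "z \<in> B k" for k y z
    using that dist_triangle[of y z "from_nat_into D k"] by (auto simp: B_def dist_commute)
  define V where "V K = - (\<Union>k<K. B k)" for K
  have "range V \<subseteq> sets \<nu>"
    using assms(2) by (auto simp: V_def B_def intro!: borel_closed closed_Compl open_UN)
  moreover have "decseq V" unfolding decseq_def V_def by auto
  moreover have "(\<Inter>K. V K) = {}"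
  proof -
    have "x \<notin> (\<Inter>K. V K)" for x
    proof -
      obtain k where "x \<in> B k"
        using dense_balls_cover[OF D, of "r / 2"] by (auto simp: B_def r_def)
      then have "x \<notin> V (Suc k)" by (auto simp: V_def)
      then show ?thesis by blast
    qed
    then show ?thesis by blast
  qed
  ultimately have "\<exists>K. measure \<nu> (V K) < \<delta> / 2"
    using \<open>0 < \<delta>\<close> by (intro decseq_ex_measure_less) auto
  then obtain K where K: "measure \<nu> (V K) < \<delta> / 2" ..
  show thesis
  proof
    show "U m \<union> V K \<in> sets borel"
      using \<open>range U \<subseteq> sets \<nu>\<close> \<open>range V \<subseteq> sets \<nu>\<close> assms(2) by auto
    have "measure \<nu> (U m \<union> V K) \<le> measure \<nu> (U m) + measure \<nu> (V K)"
      using \<open>range U \<subseteq> sets \<nu>\<close> \<open>range V \<subseteq> sets \<nu>\<close> by (intro measure_Un_le) auto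
    then show "measure \<nu> (U m \<union> V K) < \<delta>" using m K by simp
  next
    fix \<omega> N
    have nn: "dist (X n \<omega>) (Xt n \<omega>) \<le> dist (X n \<omega>) (X i \<omega>)" if "i < n" for n i
      using assms(5) that unfolding nn_process_def by simp
    show "(\<Sum>n=1..N. if \<eta> (X n \<omega>) \<noteq> \<eta> (Xt n \<omega>) then 1 else 0 :: real)
        \<le> (\<Sum>n=1..N. indicator (U m \<union> V K) (X n \<omega>)) + real K"
      unfolding U_def V_def r_def[symmetric] by (rule sum_nn_mistakes_le[OF nn small])
  qed
qed

lemma AE_limsup_nn_mistakes_less:
  fixes \<nu> :: "'a::metric_space measure" and \<eta> :: "'a \<Rightarrow> 'b" and X Xt :: "nat \<Rightarrow> 'w \<Rightarrow> 'a"
  assumes "separable_metric TYPE('a)" and "sets \<nu> = sets borel" and "finite_measure \<nu>"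
    and "ergodically_dominated P X \<nu>" and "boundary \<eta> \<in> null_sets \<nu>" and "nn_process X Xt"
    and "0 < \<epsilon>"
  shows "AE \<omega> in P. limsup (\<lambda>N. ereal ((\<Sum>n=1..N. if \<eta> (X n \<omega>) \<noteq> \<eta> (Xt n \<omega>) then 1 else 0) / real N))
           < ereal \<epsilon>"
proof -
  obtain \<delta> where "0 < \<delta>" and dominated: "\<forall>A \<in> sets borel. measure \<nu> A < \<delta> \<longrightarrow>
      (AE \<omega> in P. limsup (\<lambda>N. ereal ((\<Sum>n=1..N. indicator A (X n \<omega>)) / real N)) < ereal \<epsilon>)"
    using assms(4,7) unfolding ergodically_dominated_def by blast
  obtain A K where "A \<in> sets borel" "measure \<nu> A < \<delta>" and bound: "\<And>\<omega> N.
      (\<Sum>n=1..N. if \<eta> (X n \<omega>) \<noteq> \<eta> (Xt n \<omega>) then 1 else 0 :: real)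
        \<le> (\<Sum>n=1..N. indicator A (X n \<omega>)) + real K"
    using nn_mistakes_bounded_by_small_set[OF assms(1-3,5,6) \<open>0 < \<delta>\<close>] by blast
  have "AE \<omega> in P. limsup (\<lambda>N. ereal ((\<Sum>n=1..N. indicator A (X n \<omega>)) / real N)) < ereal \<epsilon>"
    using dominated \<open>A \<in> sets borel\<close> \<open>measure \<nu> A < \<delta>\<close> by blast
  then show ?thesis
    by (rule eventually_mono)
      (rule le_less_trans[OF limsup_average_le_if_le_plus_const[OF bound]])
qed

theorem theorem1:
  fixes P :: "'w measure" and \<nu> :: "'a::metric_space measure"
    and Y :: "'b measure" and \<eta> :: "'a \<Rightarrow> 'b"
    and X Xt :: "nat \<Rightarrow> 'w \<Rightarrow> 'a"
  assumes "separable_metric TYPE('a)"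
    and "sets \<nu> = sets borel" and "finite_measure \<nu>"
    and "prob_space P"
    and "\<And>n. X n \<in> P \<rightarrow>\<^sub>M borel"
    and "ergodically_dominated P X \<nu>"
    and "\<eta> \<in> borel \<rightarrow>\<^sub>M Y"
    and "boundary \<eta> \<in> null_sets \<nu>"
    and "nn_process X Xt"
    and "\<And>n. n \<ge> 1 \<Longrightarrow> Xt n \<in> P \<rightarrow>\<^sub>M borel"
  shows "AE \<omega> in P. limsup (\<lambda>N. ereal ((\<Sum>n=1..N. if \<eta> (X n \<omega>) \<noteq> \<eta> (Xt n \<omega>) then 1 else 0) / real N)) = 0"
proof -
  define mistakes where "mistakes \<omega> =
    (\<lambda>N. ereal ((\<Sum>n=1..N. if \<eta> (X n \<omega>) \<noteq> \<eta> (Xt n \<omega>) then 1 else 0) / real N))" for \<omega>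
  have "AE \<omega> in P. \<forall>j. limsup (mistakes \<omega>) < ereal (1 / real (Suc j))"
    unfolding mistakes_def AE_all_countable
    by (intro allI AE_limsup_nn_mistakes_less[OF assms(1-3,6,8,9)]) simp
  then have "AE \<omega> in P. limsup (mistakes \<omega>) = 0"
  proof (rule eventually_mono)
    fix \<omega> assume "\<forall>j. limsup (mistakes \<omega>) < ereal (1 / real (Suc j))"
    moreover have "0 \<le> limsup (mistakes \<omega>)"
      by (intro le_Limsup always_eventually) (auto simp: mistakes_def intro!: divide_nonneg_nonneg sum_nonneg)
    ultimately show "limsup (mistakes \<omega>) = 0"
      by (intro ereal_eq_0_if_less_inverse_Suc) auto
  qed
  then show ?thesis by (simp add: mistakes_def)
qed

end
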